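(* There is an absolute constant $c$ such that for every positive integer $n$ and every out-directed tree $T$ on $m$ vertices, $$\mathrm{R}(\vec{P}_n,T)\le c(n+m).$$
   Context: $\vec{P}_n$ denotes the directed path on $n$ vertices. An out-directed tree is an oriented tree (underlying graph a tree, no bidirected edges) with a vertex $r$ such that all edges are directed away from $r$. $\mathrm{R}(G_1,G_2)$ is the least $N$ such that every red/blue colouring of the edges of the complete directed graph $\overleftrightarrow{K}_N$ (edge $xy$ for every ordered pair of distinct vertices) contains a red copy of $G_1$ or a blue copy of $G_2$. *)

theory Defs
  imports Complex_Main
begin

(* A red/blue colouring of the complete directed graph on vertex set {0..<N}:
   col x y = True means the directed edge xy (x \<noteq> y) is red, False means blue. *)

definition has_red_dipath :: "nat \<Rightarrow> (nat \<Rightarrow> nat \<Rightarrow> bool) \<Rightarrow> nat \<Rightarrow> bool" where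
  "has_red_dipath N col n \<longleftrightarrow>
     (\<exists>v :: nat \<Rightarrow> nat. inj_on v {0..<n} \<and> v ` {0..<n} \<subseteq> {0..<N} \<and>
        (\<forall>i. Suc i < n \<longrightarrow> col (v i) (v (Suc i))))"

definition has_blue_copy :: "nat \<Rightarrow> (nat \<Rightarrow> nat \<Rightarrow> bool) \<Rightarrow> nat set \<Rightarrow> (nat \<times> nat) set \<Rightarrow> bool" where
  "has_blue_copy N col V E \<longleftrightarrow>
     (\<exists>f :: nat \<Rightarrow> nat. inj_on f V \<and> f ` V \<subseteq> {0..<N} \<and>
        (\<forall>(u,w)\<in>E. \<not> col (f u) (f w)))"

definition ramsey_prop :: "nat \<Rightarrow> nat set \<Rightarrow> (nat \<times> nat) set \<Rightarrow> nat \<Rightarrow> bool" where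
  "ramsey_prop n V E N \<longleftrightarrow>
     (\<forall>col. has_red_dipath N col n \<or> has_blue_copy N col V E)"

definition dir_ramsey :: "nat \<Rightarrow> nat set \<Rightarrow> (nat \<times> nat) set \<Rightarrow> nat" where
  "dir_ramsey n V E = (LEAST N. ramsey_prop n V E N)"

definition oriented_tree :: "nat set \<Rightarrow> (nat \<times> nat) set \<Rightarrow> bool" where
  "oriented_tree V E \<longleftrightarrow>
     finite V \<and> V \<noteq> {} \<and> E \<subseteq> V \<times> V \<and>
     (\<forall>x. (x,x) \<notin> E) \<and> (\<forall>x y. (x,y) \<in> E \<longrightarrow> (y,x) \<notin> E) \<and>
     (\<forall>u\<in>V. \<forall>w\<in>V. (u,w) \<in> (E \<union> E\<inverse>)\<^sup>*) \<and>
     card E = card V - 1"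

definition out_tree :: "nat set \<Rightarrow> (nat \<times> nat) set \<Rightarrow> bool" where
  "out_tree V E \<longleftrightarrow> oriented_tree V E \<and> (\<exists>r\<in>V. \<forall>v\<in>V. (r,v) \<in> E\<^sup>*)"

end

theory Submission
  imports Defs "HOL-Library.Sublist"
begin

(*
  Suppose the colouring has no red directed path on n vertices. Order the vertices by
  finishing time of a depth-first search in the red digraph: the red out-neighbours of a
  vertex that finish later are all DFS ancestors of it, and these lie on one red path.
  The height of a vertex, the number of vertices of a longest red path from it that only
  moves backwards in this order, lies in [1, n) and strictly increases along backward red
  edges; so the later red out-neighbours of a vertex have pairwise distinct heights.
  Re-sorting the vertices by height keeps this property and makes the height monotone.
  In that order, consecutive positions that all receive red edges from one earlier vertex
  have strictly increasing heights, so a blue position is never far away.  An out-tree on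
  m vertices is then embedded greedily, each child at the first blue position (from its
  parent's image) after the last used position; this uses at most 2(m - 1) + n positions.
*)

lemma sorted_wrt_subseq:
  assumes "subseq xs ys" "sorted_wrt P ys"
  shows "sorted_wrt P xs"
  using assms by (induction rule: list_emb.induct) (auto dest: list_emb_set)

lemma has_red_dipathI:
  assumes "distinct p" "set p \<subseteq> {0..<N}" "successively col p" "n \<le> length p"
  shows "has_red_dipath N col n"
  unfolding has_red_dipath_def
proof (intro exI conjI allI impI)
  show "inj_on ((!) p) {0..<n}"
    using assms(1,4) by (intro inj_on_nth) auto
  show "(!) p ` {0..<n} \<subseteq> {0..<N}"
    using assms(2,4) by (auto intro!: subsetD[OF assms(2)] nth_mem)
  show "col (p ! i) (p ! Suc i)" if "Suc i < n" for i
    using assms(3,4) that by (simp add: successively_nth)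
qed

lemma has_red_dipath_relabel:
  assumes "bij_betw \<pi> {0..<N} {0..<N}"
    and "has_red_dipath N (\<lambda>a b. col (\<pi> a) (\<pi> b)) n"
  shows "has_red_dipath N col n"
proof -
  obtain v where v: "inj_on v {0..<n}" "v ` {0..<n} \<subseteq> {0..<N}"
    "\<forall>i. Suc i < n \<longrightarrow> col (\<pi> (v i)) (\<pi> (v (Suc i)))"
    using assms(2) unfolding has_red_dipath_def by blast
  have "inj_on (\<pi> \<circ> v) {0..<n}"
    using v(1) inj_on_subset[OF bij_betw_imp_inj_on[OF assms(1)] v(2)] by (rule comp_inj_on)
  moreover have "(\<pi> \<circ> v) ` {0..<n} \<subseteq> {0..<N}"
    using v(2) bij_betw_imp_surj_on[OF assms(1)] by (auto simp flip: image_comp)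
  moreover have "\<forall>i. Suc i < n \<longrightarrow> col ((\<pi> \<circ> v) i) ((\<pi> \<circ> v) (Suc i))"
    using v(3) by simp
  ultimately show ?thesis
    unfolding has_red_dipath_def by blast
qed

lemma has_blue_copy_relabel:
  assumes "bij_betw \<pi> {0..<N} {0..<N}"
    and "has_blue_copy N (\<lambda>a b. col (\<pi> a) (\<pi> b)) V E"
  shows "has_blue_copy N col V E"
proof -
  obtain f where f: "inj_on f V" "f ` V \<subseteq> {0..<N}" "\<forall>(u,w)\<in>E. \<not> col (\<pi> (f u)) (\<pi> (f w))"
    using assms(2) unfolding has_blue_copy_def by blast
  have "inj_on (\<pi> \<circ> f) V"
    using f(1) inj_on_subset[OF bij_betw_imp_inj_on[OF assms(1)] f(2)] by (rule comp_inj_on)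
  moreover have "(\<pi> \<circ> f) ` V \<subseteq> {0..<N}"
    using f(2) bij_betw_imp_surj_on[OF assms(1)] by (auto simp flip: image_comp)
  moreover have "\<forall>(u,w)\<in>E. \<not> col ((\<pi> \<circ> f) u) ((\<pi> \<circ> f) w)"
    using f(3) by auto
  ultimately show ?thesis
    unfolding has_blue_copy_def by blast
qed

(* xs lists the vertices by DFS finishing time, and r lists the DFS ancestors of v,
   parent first; they finish after v. *)
definition dfs_ordered :: "('a \<Rightarrow> 'a \<Rightarrow> bool) \<Rightarrow> 'a list \<Rightarrow> bool" where
  "dfs_ordered col xs \<longleftrightarrow>
     (\<forall>as v bs. xs = as @ v # bs \<longrightarrow>
        (\<exists>r. subseq r bs \<and> successively (\<lambda>a b. col b a) (v # r) \<and>
             (\<forall>w\<in>set bs. col v w \<longrightarrow> w \<in> set r)))"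

lemma dfs_ordered_Nil: "dfs_ordered col []"
  by (simp add: dfs_ordered_def)

lemma dfs_orderedE:
  assumes "dfs_ordered col (as @ v # bs)"
  obtains r where "subseq r bs" "successively (\<lambda>a b. col b a) (v # r)"
    "\<forall>w\<in>set bs. col v w \<longrightarrow> w \<in> set r"
  using assms[unfolded dfs_ordered_def, rule_format, of as v bs] by blast

lemma dfs_ordered_Cons:
  assumes "dfs_ordered col xs" "subseq r xs" "successively (\<lambda>a b. col b a) (v # r)"
    and "\<forall>w\<in>set xs. col v w \<longrightarrow> w \<in> set r"
  shows "dfs_ordered col (v # xs)"
  unfolding dfs_ordered_def
proof (intro allI impI)
  fix as u bs assume split: "v # xs = as @ u # bs"
  show "\<exists>r. subseq r bs \<and> successively (\<lambda>a b. col b a) (u # r) \<and> (\<forall>w\<in>set bs. col u w \<longrightarrow> w \<in> set r)"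
  proof (cases as)
    case Nil
    with split have "u = v" "bs = xs" by simp_all
    with assms(2-4) show ?thesis by blast
  next
    case (Cons a as')
    with split have "xs = as' @ u # bs" by simp
    with assms(1) obtain r' where "subseq r' bs" "successively (\<lambda>a b. col b a) (u # r')"
      "\<forall>w\<in>set bs. col u w \<longrightarrow> w \<in> set r'"
      by (auto elim: dfs_orderedE)
    then show ?thesis by blast
  qed
qed

lemma dfs_ordered_exists:
  assumes "finite U" "distinct P" "successively col P" "set P \<inter> U = {}"
  shows "\<exists>xs. distinct xs \<and> set xs = U \<union> set P \<and> subseq (rev P) xs \<and> dfs_ordered col xs"
  using assms
proof (induction "2 * card U + length P" arbitrary: U P rule: less_induct)
  \<comment> \<open>P is the DFS stack, bottom first, and U the set of unvisited vertices.\<close>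
  case less
  have card_Diff: "2 * card (U - {v}) < 2 * card U" if "v \<in> U" for v
    using card_Diff1_less[OF less.prems(1) that] by simp
  consider (finished) "P = []" "U = {}" | (start) v where "P = []" "v \<in> U"
    | (push) P' t y where "P = P' @ [t]" "y \<in> U" "col t y"
    | (pop) P' t where "P = P' @ [t]" "\<forall>y\<in>U. \<not> col t y"
  proof (cases P rule: rev_cases)
    case Nil
    then show ?thesis using that(1,2) by blast
  next
    case (snoc P' t)
    then show ?thesis using that(3,4) by blast
  qed
  then show ?case
  proof cases
    case finished
    then show ?thesis by (intro exI[of _ "[]"]) (simp add: dfs_ordered_Nil)
  next
    case (start v)
    have "\<exists>xs. distinct xs \<and> set xs = (U - {v}) \<union> set [v] \<and> subseq (rev [v]) xs \<and> dfs_ordered col xs"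
    proof (rule less.hyps)
      show "2 * card (U - {v}) + length [v] < 2 * card U + length P"
        using card_Diff[OF start(2)] start(1) by simp
    qed (use start less.prems(1) in auto)
    then obtain xs where "distinct xs" "set xs = U \<union> set P" "dfs_ordered col xs"
      using start by (auto simp: insert_absorb)
    then show ?thesis
      using start(1) by auto
  next
    case (push P' t y)
    have "\<exists>xs. distinct xs \<and> set xs = (U - {y}) \<union> set (P @ [y]) \<and>
        subseq (rev (P @ [y])) xs \<and> dfs_ordered col xs"
    proof (rule less.hyps)
      show "2 * card (U - {y}) + length (P @ [y]) < 2 * card U + length P"
        using card_Diff[OF push(2)] by simp
      show "successively col (P @ [y])"
        using less.prems(3) push by (simp add: successively_append_iff)
    qed (use push less.prems in auto)
    then obtain xs where "distinct xs" "set xs = U \<union> set P" "subseq (y # rev P) xs"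
      "dfs_ordered col xs"
      using push by auto
    then show ?thesis
      by (auto dest: subseq_Cons')
  next
    case (pop P' t)
    have "\<exists>rest. distinct rest \<and> set rest = U \<union> set P' \<and> subseq (rev P') rest \<and> dfs_ordered col rest"
    proof (rule less.hyps)
      show "successively col P'"
        using less.prems(3) pop by (simp add: successively_append_iff)
    qed (use pop less.prems in auto)
    then obtain rest where rest: "distinct rest" "set rest = U \<union> set P'"
      "subseq (rev P') rest" "dfs_ordered col rest"
      by blast
    have "dfs_ordered col (t # rest)"
    proof (rule dfs_ordered_Cons[OF rest(4,3)])
      show "successively (\<lambda>a b. col b a) (t # rev P')"
        using less.prems(3) pop successively_rev[of "\<lambda>a b. col b a" "P' @ [t]"] by simp
      show "\<forall>w\<in>set rest. col t w \<longrightarrow> w \<in> set (rev P')"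
        using pop rest(2) by auto
    qed
    moreover have "distinct (t # rest)" "set (t # rest) = U \<union> set P"
      using pop rest(1,2) less.prems(2,4) by auto
    moreover have "subseq (rev P) (t # rest)"
      using pop rest(3) by simp
    ultimately show ?thesis
      by blast
  qed
qed

lemma dfs_ordered_map:
  assumes "inj_on f (set xs)" "dfs_ordered col (map f xs)"
  shows "dfs_ordered (\<lambda>a b. col (f a) (f b)) xs"
  unfolding dfs_ordered_def
proof (intro allI impI)
  fix as v bs assume xs: "xs = as @ v # bs"
  then have "dfs_ordered col (map f as @ f v # map f bs)"
    using assms(2) by simp
  then obtain r where r: "subseq r (map f bs)" "successively (\<lambda>a b. col b a) (f v # r)"
    "\<forall>w\<in>set (map f bs). col (f v) w \<longrightarrow> w \<in> set r"
    by (rule dfs_orderedE)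
  obtain S where S: "r = map f (nths bs S)"
    using r(1) by (auto simp: subseq_conv_nths nths_map)
  have "subseq (nths bs S) bs"
    by (auto simp: subseq_conv_nths)
  moreover have "successively (\<lambda>a b. col (f b) (f a)) (v # nths bs S)"
    using r(2) S successively_map[of "\<lambda>a b. col b a" f "v # nths bs S"] by simp
  moreover have "w \<in> set (nths bs S)" if "w \<in> set bs" "col (f v) (f w)" for w
  proof -
    have "f w \<in> f ` set (nths bs S)"
      using r(3) that S by auto
    moreover have "set (nths bs S) \<subseteq> set xs" "w \<in> set xs"
      using xs that(1) set_nths_subset[of bs S] by auto
    ultimately show ?thesis
      using assms(1) by (auto dest: inj_onD)
  qed
  ultimately show "\<exists>r. subseq r bs \<and> successively (\<lambda>a b. col (f b) (f a)) (v # r) \<and>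
      (\<forall>w\<in>set bs. col (f v) (f w) \<longrightarrow> w \<in> set r)"
    by blast
qed

definition red_height :: "(nat \<Rightarrow> nat \<Rightarrow> bool) \<Rightarrow> nat \<Rightarrow> nat" where
  "red_height c v = Max ((\<lambda>p. Suc (length p)) ` {p. successively (\<lambda>a b. c a b \<and> b < a) (v # p)})"

lemma descending_path_distinct:
  fixes c :: "'a::order \<Rightarrow> 'a \<Rightarrow> bool"
  assumes "successively (\<lambda>a b. c a b \<and> b < a) (v # p)"
  shows "distinct (v # p)" "set p \<subseteq> {..<v}"
proof -
  have "transp (\<lambda>a b :: 'a. b < a)"
    by (auto simp: transp_def)
  moreover have "successively (\<lambda>a b. b < a) (v # p)"
    using assms by (rule successively_mono) simp
  ultimately have "sorted_wrt (\<lambda>a b. b < a) (v # p)"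
    by (rule successively_conv_sorted_wrt[THEN iffD1])
  moreover have "distinct xs" if "sorted_wrt (\<lambda>a b. b < a) xs" for xs :: "'a list"
    using that by (induction xs) auto
  ultimately show "distinct (v # p)" "set p \<subseteq> {..<v}"
    by auto
qed

lemma finite_descending_paths:
  fixes c :: "nat \<Rightarrow> nat \<Rightarrow> bool"
  shows "finite {p. successively (\<lambda>a b. c a b \<and> b < a) (v # p)}"
proof (rule finite_subset)
  show "{p. successively (\<lambda>a b. c a b \<and> b < a) (v # p)} \<subseteq> {p. set p \<subseteq> {..<v} \<and> distinct p}"
    using descending_path_distinct[of c v] by auto
qed (simp add: finite_subset_distinct)

lemma red_height_ge_path:
  assumes "successively (\<lambda>a b. c a b \<and> b < a) (v # p)"
  shows "Suc (length p) \<le> red_height c v"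
  unfolding red_height_def using assms finite_descending_paths by (intro Max_ge) auto

lemma red_height_witness:
  obtains p where "successively (\<lambda>a b. c a b \<and> b < a) (v # p)" "red_height c v = Suc (length p)"
proof -
  have "[] \<in> {p. successively (\<lambda>a b. c a b \<and> b < a) (v # p)}"
    by simp
  then have "red_height c v \<in> (\<lambda>p. Suc (length p)) ` {p. successively (\<lambda>a b. c a b \<and> b < a) (v # p)}"
    unfolding red_height_def using finite_descending_paths by (intro Max_in) blast+
  then show ?thesis
    using that by blast
qed

lemma red_height_pos: "1 \<le> red_height c v"
  using red_height_ge_path[of c v "[]"] by simp

lemma red_height_less:
  assumes "c u w" "w < u"
  shows "red_height c w < red_height c u"
proof -
  obtain p where p: "successively (\<lambda>a b. c a b \<and> b < a) (w # p)" "red_height c w = Suc (length p)"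
    by (rule red_height_witness)
  have "successively (\<lambda>a b. c a b \<and> b < a) (u # w # p)"
    using p(1) assms by simp
  then show ?thesis
    using red_height_ge_path[of c u "w # p"] p(2) by simp
qed

lemma red_height_bound:
  assumes "\<not> has_red_dipath N c n" "v < N"
  shows "red_height c v < n"
proof (rule ccontr)
  assume "\<not> red_height c v < n"
  obtain p where p: "successively (\<lambda>a b. c a b \<and> b < a) (v # p)" "red_height c v = Suc (length p)"
    by (rule red_height_witness)
  have "has_red_dipath N c n"
  proof (rule has_red_dipathI)
    show "distinct (v # p)"
      using p(1) by (rule descending_path_distinct)
    show "set (v # p) \<subseteq> {0..<N}"
      using descending_path_distinct(2)[OF p(1)] assms(2) by auto
    show "successively c (v # p)"
      using p(1) by (rule successively_mono) simp
    show "n \<le> length (v # p)"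
      using p(2) \<open>\<not> red_height c v < n\<close> by simp
  qed
  with assms(1) show False ..
qed

lemma red_height_forward_neighbours_distinct:
  assumes "dfs_ordered c [0..<N]" "w < N" "w' < N" "u < w" "u < w'" "w \<noteq> w'"
    and "c u w" "c u w'"
  shows "red_height c w \<noteq> red_height c w'"
proof -
  have "u < N"
    using assms(2,4) by simp
  then have "[0..<N] = [0..<u] @ u # [Suc u..<N]"
    using upt_add_eq_append[of 0 u "N - u"] upt_conv_Cons[of u N] by simp
  then obtain r where r: "subseq r [Suc u..<N]" "successively (\<lambda>a b. c b a) (u # r)"
    "\<forall>w\<in>set [Suc u..<N]. c u w \<longrightarrow> w \<in> set r"
    using assms(1) by (metis dfs_orderedE)
  have "sorted_wrt (<) r"
    using sorted_wrt_subseq[OF r(1)] by simp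
  moreover have "successively (\<lambda>a b. c b a) r"
    using r(2) by (auto simp: successively_Cons)
  ultimately have "successively (\<lambda>a b. red_height c a < red_height c b) r"
    by (auto simp: successively_conv_nth sorted_wrt_nth_less intro: red_height_less)
  then have "successively (<) (map (red_height c) r)"
    by (simp add: successively_map)
  then have "sorted_wrt (<) (map (red_height c) r)"
    by (simp add: successively_conv_sorted_wrt)
  then have "inj_on (red_height c) (set r)"
    by (simp add: strict_sorted_iff distinct_map)
  moreover have "w \<in> set r" "w' \<in> set r"
    using r(3) assms by auto
  ultimately show ?thesis
    using assms(6) by (auto dest: inj_onD)
qed

definition graded :: "(nat \<Rightarrow> nat \<Rightarrow> bool) \<Rightarrow> nat \<Rightarrow> nat \<Rightarrow> (nat \<Rightarrow> nat) \<Rightarrow> bool" where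
  "graded c N n h \<longleftrightarrow>
     (\<forall>j<N. 1 \<le> h j \<and> h j < n) \<and>
     (\<forall>j j'. j \<le> j' \<longrightarrow> j' < N \<longrightarrow> h j \<le> h j') \<and>
     (\<forall>i j j'. i < j \<longrightarrow> j < j' \<longrightarrow> j' < N \<longrightarrow> c i j \<longrightarrow> c i j' \<longrightarrow> h j \<noteq> h j')"

lemma graded_bounds: "graded c N n h \<Longrightarrow> j < N \<Longrightarrow> 1 \<le> h j \<and> h j < n"
  unfolding graded_def by blast

lemma graded_mono: "graded c N n h \<Longrightarrow> j \<le> j' \<Longrightarrow> j' < N \<Longrightarrow> h j \<le> h j'"
  unfolding graded_def by blast

lemma graded_neighbours_neq:
  "graded c N n h \<Longrightarrow> i < j \<Longrightarrow> j < j' \<Longrightarrow> j' < N \<Longrightarrow> c i j \<Longrightarrow> c i j' \<Longrightarrow> h j \<noteq> h j'"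
  unfolding graded_def by blast

lemma graded_of_dfs_ordered:
  assumes "dfs_ordered c [0..<N]" "\<not> has_red_dipath N c n"
  shows "\<exists>ys h. distinct ys \<and> set ys = {0..<N} \<and> graded (\<lambda>a b. c (ys ! a) (ys ! b)) N n h"
proof -
  define ys where "ys = sort_key (red_height c) [0..<N]"
  define h where "h a = red_height c (ys ! a)" for a
  have ys: "distinct ys" "set ys = {0..<N}" "length ys = N"
    by (simp_all add: ys_def)
  then have ys_less: "ys ! j < N" if "j < N" for j
    using that nth_mem by fastforce
  have mono: "h j \<le> h j'" if "j \<le> j'" "j' < N" for j j'
    using sorted_nth_mono[OF sorted_sort_key[of "red_height c" "[0..<N]"], of j j'] that
    unfolding h_def ys_def by simp
  have forward: "ys ! i < ys ! j" if "i < j" "j < N" "c (ys ! i) (ys ! j)" for i j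
  proof (rule ccontr)
    assume "\<not> ys ! i < ys ! j"
    moreover have "ys ! i \<noteq> ys ! j"
      using ys that nth_eq_iff_index_eq by fastforce
    ultimately have "h j < h i"
      using red_height_less[of c, OF that(3)] unfolding h_def by simp
    with mono[of i j] that show False
      by simp
  qed
  have "graded (\<lambda>a b. c (ys ! a) (ys ! b)) N n h"
    unfolding graded_def
  proof (intro conjI allI impI)
    fix j assume "j < N"
    then show "1 \<le> h j" "h j < n"
      unfolding h_def using red_height_pos red_height_bound[OF assms(2) ys_less] by auto
  next
    fix j j' assume "j \<le> j'" "j' < N"
    then show "h j \<le> h j'"
      by (rule mono)
  next
    fix i j j' assume ij: "i < j" "j < j'" "j' < N" "c (ys ! i) (ys ! j)" "c (ys ! i) (ys ! j')"
    have "ys ! j \<noteq> ys ! j'"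
      using ys ij nth_eq_iff_index_eq by fastforce
    then show "h j \<noteq> h j'"
      unfolding h_def using ij forward[of i j] forward[of i j']
      by (intro red_height_forward_neighbours_distinct[OF assms(1) ys_less ys_less]) auto
  qed
  with ys show ?thesis
    by blast
qed

lemma graded_red_run:
  assumes "graded c N n h" "x < lo" "lo + d < N" "\<forall>j. lo \<le> j \<longrightarrow> j \<le> lo + d \<longrightarrow> c x j"
  shows "h lo + d \<le> h (lo + d)"
  using assms(3,4)
proof (induction d)
  case 0
  show ?case by simp
next
  case (Suc d)
  have "h lo + d \<le> h (lo + d)"
    using Suc by simp
  moreover have "h (lo + d) \<le> h (lo + Suc d)"
    using graded_mono[OF assms(1)] Suc.prems(1) by simp
  moreover have "h (lo + d) \<noteq> h (lo + Suc d)"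
    using graded_neighbours_neq[OF assms(1), of x "lo + d" "lo + Suc d"] assms(2) Suc.prems by simp
  ultimately show ?case
    by simp
qed

lemma graded_next_blue:
  assumes gr: "graded c N n h" and "x \<le> M" "M + n < N"
  shows "\<exists>q. M < q \<and> q < N \<and> \<not> c x q \<and> q + h M \<le> M + 2 + h q"
proof -
  have "1 \<le> h M" "h M < n"
    using graded_bounds[OF gr] assms(3) by auto
  then have "0 < n"
    by simp
  have ex: "\<exists>q. M < q \<and> q < N \<and> \<not> c x q"
  proof (rule ccontr)
    assume "\<not> ?thesis"
    then have "\<forall>j. Suc M \<le> j \<longrightarrow> j \<le> Suc M + (n - 1) \<longrightarrow> c x j"
      using assms(3) \<open>0 < n\<close> by auto
    then have "h (Suc M) + (n - 1) \<le> h (Suc M + (n - 1))"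
      using graded_red_run[OF gr, of x "Suc M" "n - 1"] assms(2,3) \<open>0 < n\<close> by simp
    moreover have "1 \<le> h (Suc M)" "h (Suc M + (n - 1)) < n"
      using graded_bounds[OF gr] assms(3) \<open>0 < n\<close> by auto
    ultimately show False
      using \<open>0 < n\<close> by simp
  qed
  define q where "q = (LEAST q. M < q \<and> q < N \<and> \<not> c x q)"
  have q: "M < q" "q < N" "\<not> c x q"
    using LeastI_ex[OF ex] unfolding q_def by auto
  have red: "c x j" if "M < j" "j < q" for j
    using not_less_Least[of j "\<lambda>q. M < q \<and> q < N \<and> \<not> c x q"] that q(2)
    unfolding q_def by auto
  have "q + h M \<le> M + 2 + h q"
  proof (cases "q = Suc M")
    case True
    then show ?thesis
      using graded_mono[OF gr, of M q] q(2) by simp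
  next
    case False
    then have last: "Suc M + (q - 2 - M) = q - 1"
      using q(1) by simp
    have "h (Suc M) + (q - 2 - M) \<le> h (Suc M + (q - 2 - M))"
    proof (rule graded_red_run[OF gr, of x])
      show "x < Suc M" "Suc M + (q - 2 - M) < N"
        using assms(2) last q(2) by simp_all
      show "\<forall>j. Suc M \<le> j \<longrightarrow> j \<le> Suc M + (q - 2 - M) \<longrightarrow> c x j"
        using red last by simp
    qed
    then have "h (Suc M) + (q - 2 - M) \<le> h (q - 1)"
      by (simp only: last)
    moreover have "h M \<le> h (Suc M)" "h (q - 1) \<le> h q"
      using graded_mono[OF gr] q(1,2) False by auto
    ultimately show ?thesis
      using False q(1) by linarith
  qed
  with q show ?thesis
    by blast
qed

definition blue_embedding :: "(nat \<Rightarrow> nat \<Rightarrow> bool) \<Rightarrow> (nat \<times> nat) set \<Rightarrow> nat set \<Rightarrow> (nat \<Rightarrow> nat) \<Rightarrow> bool" where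
  "blue_embedding c E A \<phi> \<longleftrightarrow> inj_on \<phi> A \<and> (\<forall>(u, v)\<in>E. u \<in> A \<longrightarrow> v \<in> A \<longrightarrow> \<not> c (\<phi> u) (\<phi> v))"

lemma blue_embedding_insert:
  assumes gr: "graded c N n h"
    and emb: "blue_embedding c E A \<phi>" "\<phi> ` A \<subseteq> {..M}" "M + n < N"
    and new: "p \<in> A" "w \<notin> A" "\<forall>u. (u, w) \<in> E \<longrightarrow> u = p" "\<forall>z\<in>A. (w, z) \<notin> E"
  obtains q where "M < q" "q < N" "q + h M \<le> M + 2 + h q"
    "blue_embedding c E (insert w A) (\<phi>(w := q))" "(\<phi>(w := q)) ` insert w A \<subseteq> {..q}"
proof -
  obtain q where q: "M < q" "q < N" "\<not> c (\<phi> p) q" "q + h M \<le> M + 2 + h q"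
    using graded_next_blue[OF gr _ emb(3), of "\<phi> p"] emb(2) new(1) by blast
  have "q \<notin> \<phi> ` A"
    using emb(2) q(1) by auto
  then have "inj_on (\<phi>(w := q)) (insert w A)"
    using emb(1) new(2) unfolding blue_embedding_def by (auto simp: inj_on_fun_updI fun_upd_image)
  moreover have "\<not> c ((\<phi>(w := q)) u) ((\<phi>(w := q)) v)"
    if "(u, v) \<in> E" "u \<in> insert w A" "v \<in> insert w A" for u v
  proof -
    have "u \<noteq> w"
      using that new by auto
    show ?thesis
    proof (cases "v = w")
      case True
      then show ?thesis
        using that(1) new q(3) by auto
    next
      case False
      then show ?thesis
        using emb(1) that \<open>u \<noteq> w\<close> unfolding blue_embedding_def by auto
    qed
  qed
  ultimately have "blue_embedding c E (insert w A) (\<phi>(w := q))"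
    unfolding blue_embedding_def by blast
  moreover have "(\<phi>(w := q)) ` insert w A \<subseteq> {..q}"
    using emb(2) q(1) by auto
  ultimately show ?thesis
    using q that by blast
qed

lemma out_tree_root:
  assumes "out_tree V E"
  obtains r where "r \<in> V" "\<forall>v\<in>V. (r, v) \<in> E\<^sup>*" "\<forall>u. (u, r) \<notin> E" "inj_on snd E"
proof -
  obtain r where r: "r \<in> V" "\<forall>v\<in>V. (r, v) \<in> E\<^sup>*"
    using assms unfolding out_tree_def by blast
  have V: "finite V" "E \<subseteq> V \<times> V" "card E = card V - 1"
    using assms unfolding out_tree_def oriented_tree_def by auto
  then have "finite E"
    using finite_subset by blast
  have heads: "V - {r} \<subseteq> snd ` E"
  proof
    fix v assume v: "v \<in> V - {r}"
    then have "(r, v) \<in> E\<^sup>*"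
      using r(2) by blast
    then obtain u where "(u, v) \<in> E"
      using v by (auto elim: rtranclE)
    then show "v \<in> snd ` E"
      by force
  qed
  have "card (V - {r}) \<le> card (snd ` E)"
    using heads \<open>finite E\<close> by (intro card_mono) auto
  moreover have "card (snd ` E) \<le> card E"
    using \<open>finite E\<close> by (rule card_image_le)
  moreover have "card E = card (V - {r})"
    using V(3) r(1) by simp
  ultimately have card_heads: "card (snd ` E) = card E" "card (V - {r}) = card (snd ` E)"
    by simp_all
  have "inj_on snd E"
    using \<open>finite E\<close> card_heads(1) by (rule eq_card_imp_inj_on)
  moreover have "snd ` E = V - {r}"
    using heads card_heads(2) \<open>finite E\<close> by (intro card_subset_eq[symmetric]) auto
  then have "\<forall>u. (u, r) \<notin> E"
    by force
  ultimately show ?thesis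
    using that r by blast
qed

lemma rtrancl_exits_set:
  assumes "(a, b) \<in> R\<^sup>*" "a \<in> A" "b \<notin> A"
  obtains x y where "(x, y) \<in> R" "x \<in> A" "y \<notin> A"
  using assms by (induction rule: rtrancl_induct) blast+

lemma has_blue_copy_if_graded:
  assumes gr: "graded c N n h" and tree: "out_tree V E" and N: "2 * (n + card V) \<le> N"
  shows "has_blue_copy N c V E"
proof -
  obtain r where r: "r \<in> V" "\<forall>v\<in>V. (r, v) \<in> E\<^sup>*" "\<forall>u. (u, r) \<notin> E" "inj_on snd E"
    by (rule out_tree_root[OF tree])
  have V: "finite V" "E \<subseteq> V \<times> V"
    using tree unfolding out_tree_def oriented_tree_def by auto
  \<comment> \<open>A is the embedded part of the tree, closed under parents, and M the last used position.\<close>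
  have grow: "\<exists>A \<phi> M. A \<subseteq> V \<and> r \<in> A \<and> card A = Suc k \<and> (\<forall>(u, w)\<in>E. w \<in> A \<longrightarrow> u \<in> A) \<and>
      blue_embedding c E A \<phi> \<and> \<phi> ` A \<subseteq> {..M} \<and> M < N \<and> M \<le> 2 * k + h M"
    if "Suc k \<le> card V" for k
    using that
  proof (induction k)
    case 0
    have "blue_embedding c E {r} (\<lambda>_. 0)"
      using r(3) unfolding blue_embedding_def by auto
    moreover have "\<forall>(u, w)\<in>E. w \<in> {r} \<longrightarrow> u \<in> {r}"
      using r(3) by auto
    moreover have "0 < N"
      using N 0 by simp
    ultimately show ?case
      using r(1) by (intro exI[of _ "{r}"] exI[of _ "\<lambda>_. 0"] exI[of _ 0]) auto
  next
    case (Suc k)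
    then obtain A \<phi> M where A: "A \<subseteq> V" "r \<in> A" "card A = Suc k" "\<forall>(u, w)\<in>E. w \<in> A \<longrightarrow> u \<in> A"
      "blue_embedding c E A \<phi>" "\<phi> ` A \<subseteq> {..M}" "M < N" "M \<le> 2 * k + h M"
      by auto
    have "A \<noteq> V"
      using A(3) Suc.prems by auto
    then obtain v where "v \<in> V" "v \<notin> A"
      using A(1) by blast
    then obtain p w where pw: "(p, w) \<in> E" "p \<in> A" "w \<notin> A"
      using r(2) A(2) by (meson rtrancl_exits_set)
    have parent: "u = p" if "(u, w) \<in> E" for u
      using inj_onD[OF r(4), of "(u, w)" "(p, w)"] that pw(1) by simp
    have "h M < n"
      using graded_bounds[OF gr A(7)] by simp
    then have "M + n < N"
      using A(8) N Suc.prems by simp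
    then obtain q where q: "M < q" "q < N" "q + h M \<le> M + 2 + h q"
      "blue_embedding c E (insert w A) (\<phi>(w := q))" "(\<phi>(w := q)) ` insert w A \<subseteq> {..q}"
    proof (rule blue_embedding_insert[OF gr A(5,6) _ pw(2,3)])
      show "\<forall>u. (u, w) \<in> E \<longrightarrow> u = p"
        using parent by blast
      show "\<forall>z\<in>A. (w, z) \<notin> E"
        using A(4) pw(3) by blast
    qed
    moreover have "insert w A \<subseteq> V"
      using A(1) pw(1) V(2) by blast
    moreover have "card (insert w A) = Suc (Suc k)"
      using A(1,3) pw(3) V(1) finite_subset by fastforce
    moreover have "\<forall>(u, v)\<in>E. v \<in> insert w A \<longrightarrow> u \<in> insert w A"
      using A(4) parent pw(2) by blast
    moreover have "q \<le> 2 * Suc k + h q"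
      using q(3) A(8) by simp
    ultimately show ?case
      using A(2) by blast
  qed
  obtain A \<phi> M where A: "A \<subseteq> V" "card A = card V" "blue_embedding c E A \<phi>" "\<phi> ` A \<subseteq> {..M}" "M < N"
    using grow[of "card V - 1"] r(1) V(1) card_gt_0_iff[of V] by (auto simp: Suc_diff_1)
  have "A = V"
    using V(1) A(1,2) by (rule card_subset_eq)
  then show ?thesis
    using A(3-5) V(2) unfolding has_blue_copy_def blue_embedding_def by fastforce
qed

lemma has_blue_copy_if_no_red_dipath:
  assumes "\<not> has_red_dipath N col n" "out_tree V E" "2 * (n + card V) \<le> N"
  shows "has_blue_copy N col V E"
proof -
  obtain xs where xs: "distinct xs" "set xs = {0..<N}" "dfs_ordered col xs"
    using dfs_ordered_exists[of "{0..<N}" "[]" col] by auto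
  have "length xs = N"
    using distinct_card[OF xs(1)] xs(2) by simp
  have xs_perm: "bij_betw ((!) xs) {0..<N} {0..<N}"
    by (rule bij_betw_nth[OF xs(1)]) (simp_all add: \<open>length xs = N\<close> xs(2) atLeast0LessThan)
  let ?c = "\<lambda>a b. col (xs ! a) (xs ! b)"
  have "map ((!) xs) [0..<N] = xs"
    using map_nth[of xs] \<open>length xs = N\<close> by simp
  then have "dfs_ordered ?c [0..<N]"
    using dfs_ordered_map[of "(!) xs" "[0..<N]" col] bij_betw_imp_inj_on[OF xs_perm] xs(3) by simp
  moreover have "\<not> has_red_dipath N ?c n"
    using has_red_dipath_relabel[OF xs_perm] assms(1) by blast
  ultimately obtain ys h where ys: "distinct ys" "set ys = {0..<N}"
    "graded (\<lambda>a b. ?c (ys ! a) (ys ! b)) N n h"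
    using graded_of_dfs_ordered by blast
  have "length ys = N"
    using distinct_card[OF ys(1)] ys(2) by simp
  have ys_perm: "bij_betw ((!) ys) {0..<N} {0..<N}"
    by (rule bij_betw_nth[OF ys(1)]) (simp_all add: \<open>length ys = N\<close> ys(2) atLeast0LessThan)
  have "has_blue_copy N (\<lambda>a b. ?c (ys ! a) (ys ! b)) V E"
    using ys(3) assms(2,3) by (rule has_blue_copy_if_graded)
  then have "has_blue_copy N ?c V E"
    by (rule has_blue_copy_relabel[OF ys_perm])
  then show ?thesis
    by (rule has_blue_copy_relabel[OF xs_perm])
qed

theorem mainTheorem15:
  shows "\<exists>c::real. \<forall>n::nat. \<forall>V E. n \<ge> 1 \<longrightarrow> out_tree V E \<longrightarrow>
           (\<exists>N. ramsey_prop n V E N) \<and>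
           real (dir_ramsey n V E) \<le> c * (real n + real (card V))"
proof (intro exI[of _ 2] allI impI)
  fix n :: nat and V E
  assume "out_tree V E"
  then have bound: "ramsey_prop n V E (2 * (n + card V))"
    unfolding ramsey_prop_def using has_blue_copy_if_no_red_dipath by blast
  then have "dir_ramsey n V E \<le> 2 * (n + card V)"
    unfolding dir_ramsey_def by (rule Least_le)
  then show "(\<exists>N. ramsey_prop n V E N) \<and> real (dir_ramsey n V E) \<le> 2 * (real n + real (card V))"
    using bound by auto
qed

end
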